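(* Let $A,A'$ be alphabets with $A\subset A'$, and let $\mathbf a,\mathbf a'$ be weights with $\mathbf a'|_A=\mathbf a|_A$. Then the map $\Phi:\mathbb T^{A,\mathbf a}\to\mathbb T^{A',\mathbf a'}$, $\Phi([w])=[w]$ (for $w\in A^{\mathbb N}\subset(A')^{\mathbb N}$), is an isometric embedding. Moreover, if $A\subsetneq A'$, then $$\mathrm{dist}_H\big(\Phi(\mathbb T^{A,\mathbf a}),\mathbb T^{A',\mathbf a'}\big)\le\max_{j\in A'\setminus A}\mathbf a'(j).$$
   Context: An alphabet is $\mathbb N$ or $\{1,\dots,M\}$, $M\ge2$. For an alphabet $A$: $A^k$ words of length $k$ ($A^0=\{\varepsilon\}$), $A^*=\bigcup_kA^k$, $A^{\mathbb N}$ infinite words; $A^n_u$, $A^{\mathbb N}_u$: words beginning with $u\in A^*$; $w(n)$: length-$n$ prefix; $i^{(k)}$: $k$ copies of $i$. Graphs $G^A_k=(A^k,E^A_k)$: $E^A_1=\{\{1,i\}:i\in A\setminus\{1\}\}$, $E^A_{k+1}=\{\{12^{(k)},i1^{(k)}\}:i\in A\setminus\{1\}\}\cup\{\{iw,iu\}:i\in A,\{w,u\}\in E^A_k\}$. $A^{\mathbb N}_{u_1}\wedge A^{\mathbb N}_{u_2}$: the $w\in A^{\mathbb N}_{u_1}$ such that for every $n>\max\{|u_1|,|u_2|\}$ some $u\in A^n_{u_2}$ has $\{w(n),u\}\in E^A_n$, together with the symmetric set. Chain joining $w,w'$: list $A^{\mathbb N}_{v_1},\dots,A^{\mathbb N}_{v_N}$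 with $w\in A^{\mathbb N}_{v_1}$, $w'\in A^{\mathbb N}_{v_N}$, consecutive $\wedge$ nonempty. Weight: non-increasing $\mathbf a:\mathbb N\to(0,1/2]$, $\mathbf a(1)=\mathbf a(2)=1/2$, $\mathbf a(i)\to0$; $\Delta_{\mathbf a}(i_1\cdots i_k)=\prod\mathbf a(i_j)$, $\Delta_{\mathbf a}(\varepsilon)=1$. $\rho_{A,\mathbf a}(w,u)=\inf\sum_{i=1}^N\Delta_{\mathbf a}(v_i)$ over chains joining $w,u$; $\mathbb T^{A,\mathbf a}=A^{\mathbb N}/\{\rho_{A,\mathbf a}=0\}$ with metric $d_{A,\mathbf a}([w],[u])=\rho_{A,\mathbf a}(w,u)$. $\mathrm{dist}_H$ is the Hausdorff distance between subsets of $\mathbb T^{A',\mathbf a'}$. *)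

theory Defs
  imports Complex_Main
begin

definition alphabet :: "nat set \<Rightarrow> bool" where
  "alphabet A \<longleftrightarrow> A = {1..} \<or> (\<exists>M\<ge>2. A = {1..M})"

text \<open>Weights: non-increasing maps from the positive naturals into (0,1/2],
  a(1) = a(2) = 1/2, tending to 0 (the value at 0 is irrelevant).\<close>
definition weight :: "(nat \<Rightarrow> real) \<Rightarrow> bool" where
  "weight a \<longleftrightarrow> (\<forall>i j. 1 \<le> i \<longrightarrow> i \<le> j \<longrightarrow> a j \<le> a i)
     \<and> (\<forall>i\<ge>1. 0 < a i \<and> a i \<le> 1/2) \<and> a 1 = 1/2 \<and> a 2 = 1/2
     \<and> (a \<longlonglongrightarrow> 0)"

definition infwords :: "nat set \<Rightarrow> (nat \<Rightarrow> nat) set" where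
  "infwords A = {w. \<forall>n. w n \<in> A}"

definition pref :: "(nat \<Rightarrow> nat) \<Rightarrow> nat \<Rightarrow> nat list" where
  "pref w n = map w [0..<n]"

definition cyl :: "nat set \<Rightarrow> nat list \<Rightarrow> (nat \<Rightarrow> nat) set" where
  "cyl A u = {w \<in> infwords A. pref w (length u) = u}"

fun E :: "nat set \<Rightarrow> nat \<Rightarrow> nat list set set" where
  "E A 0 = {}"
| "E A (Suc 0) = {{[1], [i]} | i. i \<in> A - {1}}"
| "E A (Suc (Suc k)) =
     {{1 # replicate (Suc k) 2, i # replicate (Suc k) 1} | i. i \<in> A - {1}}
     \<union> {{i # w, i # u} | i w u. i \<in> A \<and> {w, u} \<in> E A (Suc k)}"

definition wedge :: "nat set \<Rightarrow> nat list \<Rightarrow> nat list \<Rightarrow> (nat \<Rightarrow> nat) set" where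
  "wedge A u1 u2 =
     {w \<in> cyl A u1. \<forall>n > max (length u1) (length u2). \<exists>u. set u \<subseteq> A \<and> length u = n
          \<and> take (length u2) u = u2 \<and> {pref w n, u} \<in> E A n}
   \<union> {w \<in> cyl A u2. \<forall>n > max (length u1) (length u2). \<exists>u. set u \<subseteq> A \<and> length u = n
          \<and> take (length u1) u = u1 \<and> {pref w n, u} \<in> E A n}"

definition chain :: "nat set \<Rightarrow> (nat \<Rightarrow> nat) \<Rightarrow> (nat \<Rightarrow> nat) \<Rightarrow> nat list list \<Rightarrow> bool" where
  "chain A w w' vs \<longleftrightarrow> vs \<noteq> [] \<and> (\<forall>v\<in>set vs. set v \<subseteq> A)
     \<and> w \<in> cyl A (hd vs) \<and> w' \<in> cyl A (last vs)
     \<and> (\<forall>i. Suc i < length vs \<longrightarrow> wedge A (vs ! i) (vs ! Suc i) \<noteq> {})"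

definition Delta :: "(nat \<Rightarrow> real) \<Rightarrow> nat list \<Rightarrow> real" where
  "Delta a v = prod_list (map a v)"

definition rho :: "nat set \<Rightarrow> (nat \<Rightarrow> real) \<Rightarrow> (nat \<Rightarrow> nat) \<Rightarrow> (nat \<Rightarrow> nat) \<Rightarrow> real" where
  "rho A a w u = Inf {sum_list (map (Delta a) vs) | vs. chain A w u vs}"

definition cls :: "nat set \<Rightarrow> (nat \<Rightarrow> real) \<Rightarrow> (nat \<Rightarrow> nat) \<Rightarrow> (nat \<Rightarrow> nat) set" where
  "cls A a w = {u \<in> infwords A. rho A a w u = 0}"

definition T :: "nat set \<Rightarrow> (nat \<Rightarrow> real) \<Rightarrow> (nat \<Rightarrow> nat) set set" where
  "T A a = cls A a ` infwords A"

definition dT :: "nat set \<Rightarrow> (nat \<Rightarrow> real) \<Rightarrow> (nat \<Rightarrow> nat) set \<Rightarrow> (nat \<Rightarrow> nat) set \<Rightarrow> real" where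
  "dT A a C D = rho A a (SOME w. w \<in> C) (SOME u. u \<in> D)"

text \<open>Phi([w]) = [w]' : the union of the A'-classes of the members of C
  (this is a single A'-class exactly when Phi is well defined on C).\<close>
definition Phi :: "nat set \<Rightarrow> (nat \<Rightarrow> real) \<Rightarrow> (nat \<Rightarrow> nat) set \<Rightarrow> (nat \<Rightarrow> nat) set" where
  "Phi A' a' C = (\<Union>w\<in>C. cls A' a' w)"

definition hausdist_on :: "('x \<Rightarrow> 'x \<Rightarrow> real) \<Rightarrow> 'x set \<Rightarrow> 'x set \<Rightarrow> real" where
  "hausdist_on d X Y = max (SUP x\<in>X. INF y\<in>Y. d x y) (SUP y\<in>Y. INF x\<in>X. d x y)"

end

theory Submission
  imports Defs
begin

text \<open>
  Every chain over A is a chain over A' of the same cost, so rho' = rho_{A',a'} is at most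
  rho = rho_{A,a} on words over A.
  For the converse, cut a word over A' at its first letter outside A and continue with
  1 2 2 2 ... . This retraction fixes the words over A, sends touching words (the pairs that make
  a wedge nonempty) to touching words, and sends the cylinder of v into a cylinder over A of
  weight at most Delta(v) + 2^-m for any prescribed m. Hence an A'-chain between words over A
  yields an A-chain that is arbitrarily little more expensive, so rho = rho', which makes Phi a
  well-defined isometry. For the Hausdorff bound, a word z whose first letter outside A is
  j = z(k) is joined to its retraction by the two cylinders of z(0..k-1) 1 2^m and z(0..k),
  which cost at most 2^-m + a'(j).
\<close>

section \<open>Words, cylinders and weights\<close>

lemma alphabet_1_2:
  assumes "alphabet A"
  shows "1 \<in> A" and "2 \<in> A"
  using assms by (auto simp: alphabet_def)

lemma alphabet_ge_1: "alphabet A \<Longrightarrow> i \<in> A \<Longrightarrow> 1 \<le> i"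
  by (auto simp: alphabet_def)

lemma weight_pos: "weight a \<Longrightarrow> 1 \<le> i \<Longrightarrow> 0 < a i"
  by (simp add: weight_def)

lemma weight_le_half: "weight a \<Longrightarrow> 1 \<le> i \<Longrightarrow> a i \<le> 1/2"
  by (simp add: weight_def)

lemma Delta_Nil [simp]: "Delta a [] = 1"
  by (simp add: Delta_def)

lemma Delta_Cons [simp]: "Delta a (c # v) = a c * Delta a v"
  by (simp add: Delta_def)

lemma Delta_cong: "(\<And>c. c \<in> set v \<Longrightarrow> a' c = a c) \<Longrightarrow> Delta a' v = Delta a v"
  unfolding Delta_def by (metis map_cong)

lemma Delta_bounds:
  assumes "alphabet A" "weight a" "set v \<subseteq> A"
  shows "0 \<le> Delta a v \<and> Delta a v \<le> (1/2) ^ length v"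
  using assms(3)
proof (induction v)
  case Nil
  then show ?case by simp
next
  case (Cons c v)
  have c: "0 < a c" "a c \<le> 1/2"
    using Cons.prems assms weight_pos weight_le_half alphabet_ge_1 by auto
  have "a c * Delta a v \<le> (1/2) * (1/2) ^ length v"
    using Cons c by (intro mult_mono) auto
  then show ?case using Cons c by auto
qed

lemma length_pref [simp]: "length (pref w n) = n"
  by (simp add: pref_def)

lemma nth_pref: "p < n \<Longrightarrow> pref w n ! p = w p"
  by (simp add: pref_def)

lemma take_pref: "m \<le> n \<Longrightarrow> take m (pref w n) = pref w m"
  by (simp add: pref_def take_map)

lemma pref_eq_iff: "pref w n = pref z n \<longleftrightarrow> (\<forall>p<n. w p = z p)"
  by (auto simp: pref_def)

lemma set_pref_subset: "w \<in> infwords A \<Longrightarrow> set (pref w n) \<subseteq> A"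
  by (auto simp: infwords_def pref_def)

lemma cyl_iff: "w \<in> cyl A v \<longleftrightarrow> w \<in> infwords A \<and> pref w (length v) = v"
  by (simp add: cyl_def)

lemma cyl_imp_subset: "w \<in> cyl A v \<Longrightarrow> set v \<subseteq> A"
  by (metis cyl_iff set_pref_subset)

definition ext_word :: "nat list \<Rightarrow> nat \<Rightarrow> nat \<Rightarrow> nat \<Rightarrow> nat" where
  "ext_word r c t p = (if p < length r then r ! p else if p = length r then c else t)"

lemma ext_word_tail: "length r < p \<Longrightarrow> ext_word r c t p = t"
  by (simp add: ext_word_def)

lemma pref_ext_word_short: "n \<le> length r \<Longrightarrow> pref (ext_word r c t) n = take n r"
  by (rule nth_equalityI) (auto simp: nth_pref ext_word_def)

lemma pref_ext_word: "pref (ext_word r c t) (length r + 1 + m) = r @ c # replicate m t"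
  by (rule nth_equalityI) (auto simp: nth_pref ext_word_def nth_append nth_Cons split: nat.split)

lemma ext_word_in_infwords: "set r \<subseteq> A \<Longrightarrow> c \<in> A \<Longrightarrow> t \<in> A \<Longrightarrow> ext_word r c t \<in> infwords A"
  by (auto simp: ext_word_def infwords_def)

lemma ext_word_in_cyl:
  "set r \<subseteq> A \<Longrightarrow> c \<in> A \<Longrightarrow> t \<in> A \<Longrightarrow> length v \<le> length r \<Longrightarrow> take (length v) r = v
    \<Longrightarrow> ext_word r c t \<in> cyl A v"
  by (simp add: cyl_iff ext_word_in_infwords pref_ext_word_short)

section \<open>Touching words and wedges\<close>

text \<open>For every n > length r the length-n prefixes of r 1 2 2 2 ... and r i 1 1 1 ... form an
  edge of G_n, and every edge arises in this way.\<close>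
definition touching :: "nat set \<Rightarrow> (nat \<Rightarrow> nat) \<Rightarrow> (nat \<Rightarrow> nat) \<Rightarrow> bool" where
  "touching A z z' \<longleftrightarrow> z = z' \<or> (\<exists>r i. set r \<subseteq> A \<and> i \<in> A \<and> i \<noteq> 1 \<and>
     (z = ext_word r 1 2 \<and> z' = ext_word r i 1 \<or> z = ext_word r i 1 \<and> z' = ext_word r 1 2))"

lemma touching_sym: "touching A z z' \<Longrightarrow> touching A z' z"
  unfolding touching_def by blast

lemma E_branch:
  assumes "set r \<subseteq> A" "i \<in> A" "i \<noteq> 1"
  shows "{r @ 1 # replicate m 2, r @ i # replicate m 1} \<in> E A (length r + 1 + m)"
  using assms(1)
proof (induction r)
  case Nil
  then show ?case using assms by (cases m) auto
next
  case (Cons c r)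
  then have "{r @ 1 # replicate m 2, r @ i # replicate m 1} \<in> E A (Suc (length r + m))"
    by simp
  then show ?case using Cons.prems by auto
qed

lemma E_ext_words:
  assumes "set r \<subseteq> A" "i \<in> A" "i \<noteq> 1" "length r < n"
  shows "{pref (ext_word r 1 2) n, pref (ext_word r i 1) n} \<in> E A n"
proof -
  define m where "m = n - length r - 1"
  have n: "n = length r + 1 + m"
    using assms(4) by (simp add: m_def)
  show ?thesis
    unfolding n pref_ext_word by (rule E_branch[OF assms(1-3)])
qed

lemma E_elim:
  "{x, y} \<in> E A n \<Longrightarrow> \<exists>r i m. set r \<subseteq> A \<and> i \<in> A \<and> i \<noteq> 1 \<and> length r + 1 + m = n \<and>
     (x = r @ 1 # replicate m 2 \<and> y = r @ i # replicate m 1 \<or>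
      x = r @ i # replicate m 1 \<and> y = r @ 1 # replicate m 2)"
proof (induction A n arbitrary: x y rule: E.induct)
  case (1 A)
  then show ?case by simp
next
  case (2 A)
  then obtain i where "i \<in> A" "i \<noteq> 1" "{x, y} = {[1], [i]}"
    by auto
  then show ?case
    by (intro exI[of _ "[]"] exI[of _ i] exI[of _ 0]) (auto simp: doubleton_eq_iff)
next
  case (3 A k)
  from "3.prems" consider
    (branch) i where "i \<in> A - {1}" "{x, y} = {1 # replicate (Suc k) 2, i # replicate (Suc k) 1}"
  | (Cons) c w u where "{x, y} = {c # w, c # u}" "c \<in> A" "{w, u} \<in> E A (Suc k)"
    by auto
  then show ?case
  proof cases
    case branch
    then show ?thesis
      by (intro exI[of _ "[]"] exI[of _ i] exI[of _ "Suc k"]) (auto simp: doubleton_eq_iff)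
  next
    case Cons
    from "3.IH"[OF Cons(3)] obtain r i m where "set r \<subseteq> A" "i \<in> A" "i \<noteq> 1"
      "length r + 1 + m = Suc k"
      "w = r @ 1 # replicate m 2 \<and> u = r @ i # replicate m 1 \<or>
       w = r @ i # replicate m 1 \<and> u = r @ 1 # replicate m 2"
      by blast
    with Cons show ?thesis
      by (intro exI[of _ "c # r"] exI[of _ i] exI[of _ m]) (auto simp: doubleton_eq_iff)
  qed
qed

lemma E_touching:
  assumes "alphabet A" "{x, y} \<in> E A n"
  obtains r c t c' t' where "set r \<subseteq> A" "c' \<in> A" "t' \<in> A"
    "x = pref (ext_word r c t) n" "y = pref (ext_word r c' t') n"
    "touching A (ext_word r c t) (ext_word r c' t')"
proof -
  obtain r i m where rim: "set r \<subseteq> A" "i \<in> A" "i \<noteq> 1" "length r + 1 + m = n"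
    "x = r @ 1 # replicate m 2 \<and> y = r @ i # replicate m 1 \<or>
     x = r @ i # replicate m 1 \<and> y = r @ 1 # replicate m 2"
    using E_elim[OF assms(2)] by blast
  have "touching A (ext_word r 1 2) (ext_word r i 1)" "touching A (ext_word r i 1) (ext_word r 1 2)"
    using rim unfolding touching_def by blast+
  moreover have "pref (ext_word r c t) n = r @ c # replicate m t" for c t
    using pref_ext_word[of r c t m] rim(4) by simp
  ultimately show ?thesis
    using rim(5) rim(1-3) alphabet_1_2[OF assms(1)] that by metis
qed

lemma wedge_sym: "wedge A u1 u2 = wedge A u2 u1"
  unfolding wedge_def by (auto simp: max.commute)

lemma ext_word_in_wedge:
  assumes "set r \<subseteq> A" "i \<in> A" "i \<noteq> 1" "length r \<le> max (length v1) (length v2)"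
    "ext_word r 1 2 \<in> cyl A v1" "ext_word r i 1 \<in> cyl A v2"
  shows "ext_word r 1 2 \<in> wedge A v1 v2"
proof -
  have "\<exists>u. set u \<subseteq> A \<and> length u = n \<and> take (length v2) u = v2
      \<and> {pref (ext_word r 1 2) n, u} \<in> E A n"
    if n: "max (length v1) (length v2) < n" for n
  proof (intro exI conjI)
    show "set (pref (ext_word r i 1) n) \<subseteq> A"
      using assms(6) by (simp add: cyl_iff set_pref_subset)
    show "take (length v2) (pref (ext_word r i 1) n) = v2"
      using assms(6) n by (simp add: cyl_iff take_pref)
    show "{pref (ext_word r 1 2) n, pref (ext_word r i 1) n} \<in> E A n"
      using assms(4) n by (intro E_ext_words[OF assms(1-3)]) auto
  qed simp
  with assms(5) show ?thesis unfolding wedge_def by blast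
qed

lemma wedge_nonempty_if_cyl_Int:
  assumes "alphabet A" "z \<in> cyl A v1" "z \<in> cyl A v2"
  shows "wedge A v1 v2 \<noteq> {}"
proof -
  define r where "r = pref z (max (length v1) (length v2))"
  have z: "z \<in> infwords A" "pref z (length v1) = v1" "pref z (length v2) = v2"
    using assms by (simp_all add: cyl_iff)
  have "set r \<subseteq> A" "take (length v1) r = v1" "take (length v2) r = v2"
    using z by (simp_all add: r_def set_pref_subset take_pref)
  then have "ext_word r 1 2 \<in> cyl A v1" "ext_word r 2 1 \<in> cyl A v2"
    using alphabet_1_2[OF assms(1)] by (auto intro: ext_word_in_cyl simp: r_def)
  then have "ext_word r 1 2 \<in> wedge A v1 v2"
    using \<open>set r \<subseteq> A\<close> alphabet_1_2[OF assms(1)] by (intro ext_word_in_wedge) (auto simp: r_def)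
  then show ?thesis by blast
qed

lemma wedge_nonempty_if_branch:
  assumes "alphabet A" "set r \<subseteq> A" "i \<in> A" "i \<noteq> 1"
    "ext_word r 1 2 \<in> cyl A v1" "ext_word r i 1 \<in> cyl A v2"
  shows "wedge A v1 v2 \<noteq> {}"
proof (cases "length r \<le> max (length v1) (length v2)")
  case True
  then show ?thesis using ext_word_in_wedge assms by blast
next
  case False
  then have "pref (ext_word r 1 2) (length v2) = pref (ext_word r i 1) (length v2)"
    by (simp add: pref_ext_word_short)
  then have "ext_word r 1 2 \<in> cyl A v2"
    using assms(5,6) by (simp add: cyl_iff)
  then show ?thesis using wedge_nonempty_if_cyl_Int assms(1,5) by blast
qed

lemma wedge_nonempty_if_touching:
  assumes "alphabet A" "z \<in> cyl A v1" "z' \<in> cyl A v2" "touching A z z'"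
  shows "wedge A v1 v2 \<noteq> {}"
  using assms(4) unfolding touching_def
proof (elim disjE exE conjE)
  assume "z = z'"
  then show ?thesis using wedge_nonempty_if_cyl_Int assms by blast
next
  fix r i
  assume "set r \<subseteq> A" "i \<in> A" "i \<noteq> 1" "z = ext_word r 1 2" "z' = ext_word r i 1"
  then show ?thesis using wedge_nonempty_if_branch assms by blast
next
  fix r i
  assume "set r \<subseteq> A" "i \<in> A" "i \<noteq> 1" "z = ext_word r i 1" "z' = ext_word r 1 2"
  then show ?thesis using wedge_nonempty_if_branch[of A r i v2 v1] assms wedge_sym by auto
qed

lemma edge_to_cyl_touching:
  assumes A: "alphabet A" and w: "w \<in> infwords A" "w \<notin> cyl A v" and n: "length v < n"
    and u: "take (length v) u = v" "{pref w n, u} \<in> E A n"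
  obtains r c t c' t' where "length r < length v" "pref w n = pref (ext_word r c t) n"
    "ext_word r c' t' \<in> cyl A v" "touching A (ext_word r c t) (ext_word r c' t')"
proof -
  obtain r c t c' t' where rct: "set r \<subseteq> A" "c' \<in> A" "t' \<in> A"
    "pref w n = pref (ext_word r c t) n" "u = pref (ext_word r c' t') n"
    "touching A (ext_word r c t) (ext_word r c' t')"
    using E_touching[OF A u(2)] by metis
  have v: "pref (ext_word r c' t') (length v) = v"
    using u(1) rct(5) n by (simp add: take_pref)
  have "length r < length v"
  proof (rule ccontr)
    assume "\<not> length r < length v"
    then have "pref w (length v) = pref (ext_word r c' t') (length v)"
      using rct(4) n take_pref[of "length v" n w] by (simp add: take_pref pref_ext_word_short)
    with v w show False by (simp add: cyl_iff)
  qed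
  moreover have "ext_word r c' t' \<in> cyl A v"
    using v rct(1-3) by (simp add: cyl_iff ext_word_in_infwords)
  ultimately show ?thesis using rct(4,6) that by blast
qed

lemma touching_if_edges:
  assumes A: "alphabet A" and w: "w \<in> infwords A" and L: "length v \<le> L"
    and edges: "\<forall>n>L. \<exists>u. set u \<subseteq> A \<and> length u = n \<and> take (length v) u = v
      \<and> {pref w n, u} \<in> E A n"
  shows "\<exists>z\<in>cyl A v. touching A w z"
proof (cases "w \<in> cyl A v")
  case True
  then show ?thesis by (auto simp: touching_def)
next
  case False
  have branch: "\<exists>r c t c' t'. length r < length v \<and> pref w n = pref (ext_word r c t) n
      \<and> ext_word r c' t' \<in> cyl A v \<and> touching A (ext_word r c t) (ext_word r c' t')"
    if "L < n" for n
    using edges that L edge_to_cyl_touching[OF A w False, of n] by (metis le_less_trans)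
  obtain r c t c' t' where rct: "length r < length v" "pref w (Suc L) = pref (ext_word r c t) (Suc L)"
    "ext_word r c' t' \<in> cyl A v" "touching A (ext_word r c t) (ext_word r c' t')"
    using branch[of "Suc L"] by blast
  have "w p = ext_word r c t p" for p
  proof (cases "p < Suc L")
    case True
    then show ?thesis using rct(2) by (simp add: pref_eq_iff)
  next
    case False
    \<comment> \<open>w is constant from position L on: the branching point of every edge lies before v ends\<close>
    obtain r' c'' t'' where r': "length r' < length v"
      "pref w (Suc p) = pref (ext_word r' c'' t'') (Suc p)"
      using branch[of "Suc p"] False by auto
    have "w p = t''" "w L = t''"
      using r' False L by (auto simp: pref_eq_iff ext_word_tail)
    moreover have "w L = t"
      using rct(1,2) L by (auto simp: pref_eq_iff ext_word_tail)
    ultimately show ?thesis using rct(1) False L by (simp add: ext_word_tail)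
  qed
  then have "w = ext_word r c t" by (simp add: fun_eq_iff)
  then show ?thesis using rct(3,4) by blast
qed

lemma touching_if_wedge_nonempty:
  assumes "alphabet A" "wedge A v1 v2 \<noteq> {}"
  shows "\<exists>z\<in>cyl A v1. \<exists>z'\<in>cyl A v2. touching A z z'"
proof -
  obtain w where "w \<in> wedge A v1 v2"
    using assms(2) by blast
  then consider
      "w \<in> cyl A v1" "\<forall>n > max (length v1) (length v2). \<exists>u. set u \<subseteq> A \<and> length u = n
          \<and> take (length v2) u = v2 \<and> {pref w n, u} \<in> E A n"
    | "w \<in> cyl A v2" "\<forall>n > max (length v2) (length v1). \<exists>u. set u \<subseteq> A \<and> length u = n
          \<and> take (length v1) u = v1 \<and> {pref w n, u} \<in> E A n"
    unfolding wedge_def by (auto simp: max.commute)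
  then show ?thesis
  proof cases
    case 1
    then show ?thesis
      using touching_if_edges[OF assms(1) _ _ 1(2)] by (auto simp: cyl_iff)
  next
    case 2
    then obtain z where "z \<in> cyl A v1" "touching A w z"
      using touching_if_edges[OF assms(1) _ _ 2(2)] by (auto simp: cyl_iff)
    then show ?thesis using 2 touching_sym by blast
  qed
qed

section \<open>The pseudometric rho\<close>

definition chain_cost :: "(nat \<Rightarrow> real) \<Rightarrow> nat list list \<Rightarrow> real" where
  "chain_cost a vs = sum_list (map (Delta a) vs)"

lemma rho_eq_Inf: "rho A a w u = Inf {chain_cost a vs | vs. chain A w u vs}"
  by (simp add: rho_def chain_cost_def)

lemma chain_cost_nonneg:
  assumes "alphabet A" "weight a" "chain A w u vs"
  shows "0 \<le> chain_cost a vs"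
  using assms Delta_bounds unfolding chain_cost_def chain_def by (auto intro!: sum_list_nonneg)

lemma chain_single: "w \<in> cyl A v \<Longrightarrow> u \<in> cyl A v \<Longrightarrow> chain A w u [v]"
  by (simp add: chain_def cyl_imp_subset)

lemma chain_pair:
  "w \<in> cyl A v \<Longrightarrow> u \<in> cyl A v' \<Longrightarrow> wedge A v v' \<noteq> {} \<Longrightarrow> chain A w u [v, v']"
  by (auto simp: chain_def cyl_imp_subset less_Suc_eq)

lemma rho_le_chain_cost:
  assumes "alphabet A" "weight a" "chain A w u vs"
  shows "rho A a w u \<le> chain_cost a vs"
  unfolding rho_eq_Inf
proof (rule cInf_lower)
  show "chain_cost a vs \<in> {chain_cost a vs | vs. chain A w u vs}"
    using assms(3) by blast
  show "bdd_below {chain_cost a vs | vs. chain A w u vs}"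
    using chain_cost_nonneg[OF assms(1,2)] by (auto intro: bdd_belowI[of _ 0])
qed

lemma le_rho:
  assumes "w \<in> infwords A" "u \<in> infwords A" "\<And>vs. chain A w u vs \<Longrightarrow> x \<le> chain_cost a vs"
  shows "x \<le> rho A a w u"
proof -
  have "chain A w u [[]]"
    using assms(1,2) by (intro chain_single) (simp_all add: cyl_iff pref_def)
  then show ?thesis
    unfolding rho_eq_Inf by (intro cInf_greatest) (use assms(3) in blast)+
qed

lemma rho_nonneg:
  assumes "alphabet A" "weight a" "w \<in> infwords A" "u \<in> infwords A"
  shows "0 \<le> rho A a w u"
  using assms chain_cost_nonneg by (intro le_rho) auto

lemma rho_refl:
  assumes A: "alphabet A" and a: "weight a" and w: "w \<in> infwords A"
  shows "rho A a w w = 0"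
proof -
  have "rho A a w w \<le> 0 + e" if "e > 0" for e
  proof -
    obtain n where n: "(1/2::real) ^ n < e"
      using real_arch_pow_inv[OF \<open>e > 0\<close>, of "1/2"] by auto
    have "w \<in> cyl A (pref w n)"
      using w by (simp add: cyl_iff)
    then have "rho A a w w \<le> chain_cost a [pref w n]"
      by (intro rho_le_chain_cost[OF A a] chain_single)
    also have "\<dots> \<le> (1/2) ^ n"
      using Delta_bounds[OF A a set_pref_subset[OF w]] by (simp add: chain_cost_def)
    finally show ?thesis using n by simp
  qed
  then have "rho A a w w \<le> 0"
    by (rule field_le_epsilon)
  then show ?thesis using rho_nonneg[OF A a w w] by simp
qed

lemma chain_rev:
  assumes "chain A w u vs"
  shows "chain A u w (rev vs)"
proof -
  have "wedge A (rev vs ! i) (rev vs ! Suc i) \<noteq> {}" if i: "Suc i < length vs" for i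
  proof -
    define j where "j = length vs - 2 - i"
    have "rev vs ! i = vs ! Suc j" "rev vs ! Suc i = vs ! j"
      using i by (auto simp: rev_nth j_def Suc_diff_Suc numeral_2_eq_2)
    moreover have "wedge A (vs ! j) (vs ! Suc j) \<noteq> {}"
      using assms i unfolding chain_def j_def by auto
    ultimately show ?thesis using wedge_sym by metis
  qed
  then show ?thesis using assms by (auto simp: chain_def hd_rev last_rev)
qed

lemma rho_sym:
  assumes "alphabet A" "weight a" "w \<in> infwords A" "u \<in> infwords A"
  shows "rho A a u w = rho A a w u"
proof -
  have "rho A a u w \<le> rho A a w u" if "w \<in> infwords A" "u \<in> infwords A" for w u
  proof (rule le_rho[OF that])
    fix vs
    assume "chain A w u vs"
    then have "rho A a u w \<le> chain_cost a (rev vs)"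
      using rho_le_chain_cost chain_rev assms(1,2) by blast
    then show "rho A a u w \<le> chain_cost a vs"
      by (simp add: chain_cost_def rev_map[symmetric] sum_list_rev)
  qed
  then show ?thesis using assms(3,4) by (meson antisym)
qed

lemma chain_append:
  assumes A: "alphabet A" and vs: "chain A w u vs" and vs': "chain A u x vs'"
  shows "chain A w x (vs @ vs')"
proof -
  have ne: "vs \<noteq> []" "vs' \<noteq> []"
    using vs vs' by (auto simp: chain_def)
  have "wedge A ((vs @ vs') ! i) ((vs @ vs') ! Suc i) \<noteq> {}"
    if i: "Suc i < length (vs @ vs')" for i
  proof -
    consider "Suc i < length vs" | "Suc i = length vs" | "Suc i > length vs"
      by linarith
    then show ?thesis
    proof cases
      case 1
      then show ?thesis using vs by (simp add: chain_def nth_append)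
    next
      case 2
      then have "(vs @ vs') ! i = last vs" "(vs @ vs') ! Suc i = hd vs'"
        using ne by (simp_all add: nth_append last_conv_nth hd_conv_nth flip: 2)
      moreover have "u \<in> cyl A (last vs)" "u \<in> cyl A (hd vs')"
        using vs vs' by (auto simp: chain_def)
      ultimately show ?thesis using wedge_nonempty_if_cyl_Int[OF A] by metis
    next
      case 3
      define j where "j = i - length vs"
      have "(vs @ vs') ! i = vs' ! j" "(vs @ vs') ! Suc i = vs' ! Suc j" "Suc j < length vs'"
        using 3 i by (auto simp: nth_append j_def Suc_diff_le)
      then show ?thesis using vs' by (simp add: chain_def)
    qed
  qed
  then show ?thesis using vs vs' ne by (auto simp: chain_def)
qed

lemma rho_triangle:
  assumes A: "alphabet A" and a: "weight a"
    and w: "w \<in> infwords A" and u: "u \<in> infwords A" and x: "x \<in> infwords A"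
  shows "rho A a w x \<le> rho A a w u + rho A a u x"
proof -
  have "rho A a w x - chain_cost a vs' \<le> rho A a w u" if vs': "chain A u x vs'" for vs'
  proof (rule le_rho[OF w u])
    fix vs
    assume "chain A w u vs"
    then have "rho A a w x \<le> chain_cost a (vs @ vs')"
      using rho_le_chain_cost[OF A a chain_append[OF A _ vs']] by blast
    then show "rho A a w x - chain_cost a vs' \<le> chain_cost a vs"
      by (simp add: chain_cost_def)
  qed
  note bound = this
  have "rho A a w x - rho A a w u \<le> rho A a u x"
  proof (rule le_rho[OF u x])
    fix vs'
    assume "chain A u x vs'"
    from bound[OF this] show "rho A a w x - rho A a w u \<le> chain_cost a vs'"
      by simp
  qed
  then show ?thesis by simp
qed

lemma rho_cong:
  assumes A: "alphabet A" and a: "weight a"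
    and ws: "w \<in> infwords A" "w' \<in> infwords A" "u \<in> infwords A" "u' \<in> infwords A"
    and zero: "rho A a w w' = 0" "rho A a u u' = 0"
  shows "rho A a w' u' = rho A a w u"
proof -
  have zero': "rho A a w' w = 0" "rho A a u' u = 0"
    using zero rho_sym[OF A a] ws by metis+
  have "rho A a w' u' \<le> rho A a w' w + rho A a w u'" "rho A a w u' \<le> rho A a w u + rho A a u u'"
    "rho A a w u \<le> rho A a w w' + rho A a w' u" "rho A a w' u \<le> rho A a w' u' + rho A a u' u"
    using rho_triangle[OF A a] ws by blast+
  then show ?thesis using zero zero' by linarith
qed

lemma rho_ext_word_le:
  assumes A: "alphabet A" and a: "weight a" and r: "set r \<subseteq> A" and j: "j \<in> A" "j \<noteq> 1"
    and z: "z \<in> cyl A (r @ [j])"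
  shows "rho A a (ext_word r 1 2) z \<le> (1/2) ^ m + a j"
proof -
  define v where "v = pref (ext_word r 1 2) (length r + 1 + m)"
  have v: "ext_word r 1 2 \<in> cyl A v"
    using r alphabet_1_2[OF A] by (simp add: cyl_iff v_def ext_word_in_infwords)
  have "ext_word r j 1 \<in> cyl A (r @ [j])"
    using pref_ext_word[of r j 1 0] r j alphabet_1_2[OF A] by (simp add: cyl_iff ext_word_in_infwords)
  moreover have "touching A (ext_word r 1 2) (ext_word r j 1)"
    using r j unfolding touching_def by blast
  ultimately have "chain A (ext_word r 1 2) z [v, r @ [j]]"
    using v z by (intro chain_pair wedge_nonempty_if_touching[OF A])
  then have "rho A a (ext_word r 1 2) z \<le> chain_cost a [v, r @ [j]]"
    by (rule rho_le_chain_cost[OF A a])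
  also have "\<dots> = Delta a v + Delta a r * a j"
    by (simp add: chain_cost_def Delta_def)
  also have "Delta a v \<le> (1/2) ^ m"
  proof -
    have "Delta a v \<le> (1/2) ^ (length r + 1 + m)"
      using Delta_bounds[OF A a cyl_imp_subset[OF v]] by (simp add: v_def)
    also have "\<dots> \<le> (1/2) ^ m"
      by (rule power_decreasing) auto
    finally show ?thesis .
  qed
  also have "Delta a r * a j \<le> a j"
  proof -
    have "Delta a r \<le> (1/2) ^ length r"
      using Delta_bounds[OF A a r] by simp
    also have "\<dots> \<le> 1"
      by (simp add: power_le_one)
    finally have "Delta a r \<le> 1" .
    moreover have "0 < a j"
      using weight_pos[OF a alphabet_ge_1[OF A j(1)]] .
    ultimately show ?thesis by (simp add: mult_le_cancel_right1)
  qed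
  finally show ?thesis by simp
qed

lemma rho_ext_word_le_weight:
  assumes "alphabet A" "weight a" "set r \<subseteq> A" "j \<in> A" "j \<noteq> 1" "z \<in> cyl A (r @ [j])"
  shows "rho A a (ext_word r 1 2) z \<le> a j"
proof (rule field_le_epsilon)
  fix e :: real
  assume "e > 0"
  then obtain m where "(1/2::real) ^ m < e"
    using real_arch_pow_inv[of e "1/2"] by auto
  then show "rho A a (ext_word r 1 2) z \<le> a j + e"
    using rho_ext_word_le[OF assms, of m] by simp
qed

section \<open>Changing the alphabet\<close>

lemma E_mono: "A \<subseteq> A' \<Longrightarrow> E A n \<subseteq> E A' n"
  by (induction A n rule: E.induct) (auto 0 3)

lemma infwords_mono: "A \<subseteq> A' \<Longrightarrow> infwords A \<subseteq> infwords A'"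
  by (auto simp: infwords_def)

lemma cyl_mono: "A \<subseteq> A' \<Longrightarrow> cyl A v \<subseteq> cyl A' v"
  using infwords_mono by (auto simp: cyl_def)

lemma wedge_mono: "A \<subseteq> A' \<Longrightarrow> wedge A v1 v2 \<subseteq> wedge A' v1 v2"
  unfolding wedge_def using cyl_mono[of A A'] E_mono[of A A'] by blast

lemma chain_mono: "A \<subseteq> A' \<Longrightarrow> chain A w u vs \<Longrightarrow> chain A' w u vs"
  unfolding chain_def using cyl_mono[of A A'] wedge_mono[of A A'] by blast

lemma first_outside:
  fixes z :: "nat \<Rightarrow> 'a"
  assumes "z k \<notin> A"
  obtains j where "j \<le> k" "\<forall>i<j. z i \<in> A" "z j \<notin> A"
proof
  show "(LEAST j. z j \<notin> A) \<le> k"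
    using Least_le[of "\<lambda>j. z j \<notin> A", OF assms] .
  show "z (LEAST j. z j \<notin> A) \<notin> A"
    using assms by (rule LeastI)
  show "\<forall>i<(LEAST j. z j \<notin> A). z i \<in> A"
    using not_less_Least by blast
qed

definition retract :: "nat set \<Rightarrow> (nat \<Rightarrow> nat) \<Rightarrow> nat \<Rightarrow> nat" where
  "retract A z = (if z \<in> infwords A then z else ext_word (pref z (LEAST k. z k \<notin> A)) 1 2)"

lemma retract_eq_self: "z \<in> infwords A \<Longrightarrow> retract A z = z"
  by (simp add: retract_def)

lemma retract_eq_ext_word:
  assumes "\<forall>i<k. z i \<in> A" "z k \<notin> A"
  shows "retract A z = ext_word (pref z k) 1 2"
proof -
  have "(LEAST k. z k \<notin> A) = k"
    using assms by (intro Least_equality) (auto simp: not_le[symmetric])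
  then show ?thesis using assms(2) by (auto simp: retract_def infwords_def)
qed

lemma retract_in_infwords: "alphabet A \<Longrightarrow> retract A z \<in> infwords A"
proof (cases "z \<in> infwords A")
  case False
  then obtain k where "z k \<notin> A"
    by (auto simp: infwords_def)
  then obtain j where "\<forall>i<j. z i \<in> A" "z j \<notin> A"
    by (rule first_outside)
  moreover assume "alphabet A"
  ultimately show ?thesis
    using alphabet_1_2 by (auto simp: retract_eq_ext_word pref_def intro!: ext_word_in_infwords)
qed (simp add: retract_eq_self)

lemma pref_retract:
  assumes "set (pref z n) \<subseteq> A"
  shows "pref (retract A z) n = pref z n"
proof (cases "z \<in> infwords A")
  case False
  then obtain k where "z k \<notin> A"
    by (auto simp: infwords_def)
  then obtain j where j: "\<forall>i<j. z i \<in> A" "z j \<notin> A"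
    by (rule first_outside)
  moreover have "\<forall>i<n. z i \<in> A"
    using assms by (auto simp: pref_def)
  then have "n \<le> j"
    using j(2) not_le by blast
  ultimately show ?thesis
    by (simp add: retract_eq_ext_word pref_ext_word_short take_pref)
qed (simp add: retract_eq_self)

lemma retract_eq_if_pref_eq:
  assumes "pref z n = pref z' n" "\<not> set (pref z n) \<subseteq> A"
  shows "retract A z = retract A z'"
proof -
  have "\<exists>p<n. z p \<notin> A"
    using assms(2) by (auto simp: pref_def)
  then obtain p where "p < n" "z p \<notin> A"
    by blast
  obtain j where j: "j \<le> p" "\<forall>i<j. z i \<in> A" "z j \<notin> A"
    using \<open>z p \<notin> A\<close> by (rule first_outside)
  with \<open>p < n\<close> have "\<forall>i<j. z' i \<in> A" "z' j \<notin> A" "pref z j = pref z' j"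
    using assms(1) by (auto simp: pref_eq_iff)
  then show ?thesis
    using j by (simp add: retract_eq_ext_word)
qed

lemma retract_branch_touching:
  assumes "alphabet A" "i \<noteq> 1"
  shows "touching A (retract A (ext_word r 1 2)) (retract A (ext_word r i 1))"
proof (cases "set r \<subseteq> A")
  case True
  have 12: "1 \<in> A" "2 \<in> A"
    using alphabet_1_2[OF assms(1)] by auto
  then have z: "retract A (ext_word r 1 2) = ext_word r 1 2"
    using True by (simp add: retract_eq_self ext_word_in_infwords)
  show ?thesis
  proof (cases "i \<in> A")
    case True
    then have "retract A (ext_word r i 1) = ext_word r i 1"
      using \<open>set r \<subseteq> A\<close> 12 by (simp add: retract_eq_self ext_word_in_infwords)
    then show ?thesis
      using z True \<open>set r \<subseteq> A\<close> assms(2) unfolding touching_def by blast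
  next
    case False
    have "retract A (ext_word r i 1) = ext_word (pref (ext_word r i 1) (length r)) 1 2"
      using False \<open>set r \<subseteq> A\<close> by (intro retract_eq_ext_word) (auto simp: ext_word_def)
    then show ?thesis
      using z by (simp add: touching_def pref_ext_word_short)
  qed
next
  case False
  then have "retract A (ext_word r 1 2) = retract A (ext_word r i 1)"
    by (intro retract_eq_if_pref_eq[of _ "length r"]) (simp_all add: pref_ext_word_short)
  then show ?thesis by (simp add: touching_def)
qed

lemma retract_touching:
  assumes "alphabet A" "touching A' z z'"
  shows "touching A (retract A z) (retract A z')"
  using assms(2) unfolding touching_def[of A' z z']
proof (elim disjE exE conjE)
  assume "z = z'"
  then show ?thesis by (simp add: touching_def)
qed (use retract_branch_touching[OF assms(1)] touching_sym in blast)+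

definition retract_word :: "nat set \<Rightarrow> nat \<Rightarrow> nat list \<Rightarrow> nat list" where
  "retract_word A m v =
     (if set v \<subseteq> A then v else pref (retract A (ext_word v 1 2)) (length v + m))"

lemma retract_in_cyl:
  assumes "alphabet A" "z \<in> cyl A' v"
  shows "retract A z \<in> cyl A (retract_word A m v)"
proof (cases "set v \<subseteq> A")
  case True
  then show ?thesis
    using assms by (simp add: cyl_iff retract_word_def retract_in_infwords pref_retract)
next
  case False
  have "pref z (length v) = pref (ext_word v 1 2) (length v)"
    using assms(2) by (simp add: cyl_iff pref_ext_word_short)
  then have "retract A z = retract A (ext_word v 1 2)"
    using False assms(2) by (intro retract_eq_if_pref_eq[of _ "length v"]) (simp_all add: cyl_iff)
  then show ?thesis
    using False assms(1) by (simp add: cyl_iff retract_word_def retract_in_infwords)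
qed

lemma retract_word_subset: "alphabet A \<Longrightarrow> set (retract_word A m v) \<subseteq> A"
  by (simp add: retract_word_def set_pref_subset retract_in_infwords)

lemma chain_retract_word:
  assumes A: "alphabet A" "alphabet A'"
    and w: "w \<in> infwords A" "u \<in> infwords A" and vs: "chain A' w u vs"
  shows "chain A w u (map (retract_word A m) vs)"
proof -
  have "wedge A (retract_word A m (vs ! i)) (retract_word A m (vs ! Suc i)) \<noteq> {}"
    if i: "Suc i < length vs" for i
  proof -
    have "wedge A' (vs ! i) (vs ! Suc i) \<noteq> {}"
      using vs i by (simp add: chain_def)
    then obtain z z' where z: "z \<in> cyl A' (vs ! i)" "z' \<in> cyl A' (vs ! Suc i)" "touching A' z z'"
      using touching_if_wedge_nonempty[OF A(2)] by blast
    show ?thesis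
      by (rule wedge_nonempty_if_touching[OF A(1) retract_in_cyl[OF A(1) z(1)]
            retract_in_cyl[OF A(1) z(2)] retract_touching[OF A(1) z(3)]])
  qed
  moreover have "retract A w \<in> cyl A (retract_word A m (hd vs))"
    "retract A u \<in> cyl A (retract_word A m (last vs))"
    using vs unfolding chain_def by (auto intro: retract_in_cyl[OF A(1)])
  ultimately show ?thesis
    using vs w retract_word_subset[OF A(1)] by (auto simp: chain_def hd_map last_map retract_eq_self)
qed

section \<open>The quotient and the embedding\<close>

lemma cls_self: "alphabet A \<Longrightarrow> weight a \<Longrightarrow> w \<in> infwords A \<Longrightarrow> w \<in> cls A a w"
  by (simp add: cls_def rho_refl)

lemma cls_eq:
  assumes A: "alphabet A" and a: "weight a" and w: "w \<in> infwords A" "u \<in> infwords A"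
    and zero: "rho A a w u = 0"
  shows "cls A a u = cls A a w"
proof -
  have "rho A a u x = rho A a w x" if "x \<in> infwords A" for x
    using rho_cong[OF A a w that that zero rho_refl[OF A a that]] .
  then show ?thesis by (auto simp: cls_def)
qed

lemma dT_cls:
  assumes A: "alphabet A" and a: "weight a" and w: "w \<in> infwords A" and u: "u \<in> infwords A"
  shows "dT A a (cls A a w) (cls A a u) = rho A a w u"
proof -
  have "(SOME x. x \<in> cls A a w) \<in> cls A a w"
    using cls_self[OF A a w] by (rule someI[where P = "\<lambda>x. x \<in> cls A a w"])
  moreover have "(SOME x. x \<in> cls A a u) \<in> cls A a u"
    using cls_self[OF A a u] by (rule someI[where P = "\<lambda>x. x \<in> cls A a u"])
  ultimately show ?thesis
    unfolding dT_def using rho_cong[OF A a w _ u] by (simp add: cls_def)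
qed

lemma dT_nonneg: "alphabet A \<Longrightarrow> weight a \<Longrightarrow> C \<in> T A a \<Longrightarrow> D \<in> T A a \<Longrightarrow> 0 \<le> dT A a C D"
  by (auto simp: T_def dT_cls rho_nonneg)

lemma dT_refl: "alphabet A \<Longrightarrow> weight a \<Longrightarrow> C \<in> T A a \<Longrightarrow> dT A a C C = 0"
  by (auto simp: T_def dT_cls rho_refl)

lemma hausdist_on_le:
  fixes d :: "'x \<Rightarrow> 'x \<Rightarrow> real"
  assumes XY: "X \<subseteq> Y" and X: "X \<noteq> {}"
    and nonneg: "\<And>x y. x \<in> Y \<Longrightarrow> y \<in> Y \<Longrightarrow> 0 \<le> d x y"
    and refl: "\<And>x. x \<in> X \<Longrightarrow> d x x = 0"
    and close: "\<And>y. y \<in> Y \<Longrightarrow> \<exists>x\<in>X. d x y \<le> B"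
  shows "hausdist_on d X Y \<le> B"
proof -
  have bdd: "bdd_below ((\<lambda>x. d x y) ` X)" "bdd_below (d x ` Y)" if "x \<in> Y" "y \<in> Y" for x y
    using that XY nonneg by (auto intro!: bdd_belowI[of _ 0])
  obtain x0 where "x0 \<in> X"
    using X by blast
  then obtain x where "x \<in> X" "d x x0 \<le> B"
    using close XY by blast
  with \<open>x0 \<in> X\<close> have B: "0 \<le> B"
    using XY nonneg by (meson order_trans subsetD)
  have "(INF x\<in>X. d x y) \<le> B" if y: "y \<in> Y" for y
  proof -
    obtain x where "x \<in> X" "d x y \<le> B"
      using close[OF y] by blast
    with bdd[OF _ y] XY show ?thesis by (meson cINF_lower order_trans subsetD)
  qed
  moreover have "(INF y\<in>Y. d x y) \<le> B" if x: "x \<in> X" for x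
  proof -
    have "(INF y\<in>Y. d x y) \<le> d x x"
      using x XY bdd[of x x] by (intro cINF_lower) auto
    then show ?thesis using refl[OF x] B by simp
  qed
  ultimately show ?thesis
    using X XY unfolding hausdist_on_def by (auto intro!: cSUP_least)
qed

locale alphabet_extension =
  fixes A A' :: "nat set" and a a' :: "nat \<Rightarrow> real"
  assumes alphabet_A: "alphabet A" and alphabet_A': "alphabet A'" and A_subset: "A \<subseteq> A'"
    and weight_a: "weight a" and weight_a': "weight a'" and a'_eq_a: "\<forall>i\<in>A. a' i = a i"
begin

lemma infwords_subset: "w \<in> infwords A \<Longrightarrow> w \<in> infwords A'"
  using infwords_mono[OF A_subset] by blast

lemma rho'_le_rho:
  assumes "w \<in> infwords A" "u \<in> infwords A"
  shows "rho A' a' w u \<le> rho A a w u"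
proof (rule le_rho[OF assms])
  fix vs
  assume vs: "chain A w u vs"
  then have "rho A' a' w u \<le> chain_cost a' vs"
    by (intro rho_le_chain_cost[OF alphabet_A' weight_a'] chain_mono[OF A_subset])
  also have "\<dots> = chain_cost a vs"
    using vs a'_eq_a unfolding chain_cost_def chain_def
    by (intro arg_cong[where f = sum_list] map_cong refl Delta_cong) blast
  finally show "rho A' a' w u \<le> chain_cost a vs" .
qed

lemma Delta_retract_word_le:
  assumes v: "set v \<subseteq> A'"
  shows "Delta a (retract_word A m v) \<le> Delta a' v + (1/2) ^ m"
proof (cases "set v \<subseteq> A")
  case True
  then have "Delta a' v = Delta a v"
    using a'_eq_a by (intro Delta_cong) blast
  then show ?thesis
    using True Delta_bounds[OF alphabet_A' weight_a' v] by (simp add: retract_word_def)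
next
  case False
  have "Delta a (retract_word A m v) \<le> (1/2) ^ length (retract_word A m v)"
    using Delta_bounds[OF alphabet_A weight_a retract_word_subset[OF alphabet_A]] by blast
  also have "\<dots> \<le> (1/2) ^ m"
    using False by (intro power_decreasing) (auto simp: retract_word_def)
  also have "\<dots> \<le> Delta a' v + (1/2) ^ m"
    using Delta_bounds[OF alphabet_A' weight_a' v] by simp
  finally show ?thesis .
qed

lemma rho_le_rho':
  assumes w: "w \<in> infwords A" and u: "u \<in> infwords A"
  shows "rho A a w u \<le> rho A' a' w u"
proof -
  have "rho A a w u \<le> chain_cost a' vs + e" if vs: "chain A' w u vs" and e: "e > 0" for vs e
  proof -
    define N where "N = real (length vs)"
    obtain m where m: "(1/2::real) ^ m < e / (N + 1)"
      using e real_arch_pow_inv[of "e / (N + 1)" "1/2"] by (auto simp: N_def)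
    have "rho A a w u \<le> chain_cost a (map (retract_word A m) vs)"
      by (intro rho_le_chain_cost[OF alphabet_A weight_a]
          chain_retract_word[OF alphabet_A alphabet_A' w u vs])
    also have "\<dots> \<le> (\<Sum>v\<leftarrow>vs. Delta a' v + (1/2) ^ m)"
      unfolding chain_cost_def map_map o_def
      using vs Delta_retract_word_le by (intro sum_list_mono) (auto simp: chain_def)
    also have "\<dots> = chain_cost a' vs + N * (1/2) ^ m"
      by (simp add: chain_cost_def sum_list_addf sum_list_triv N_def)
    also have "N * (1/2) ^ m \<le> e"
      using m by (simp add: N_def field_simps)
    finally show ?thesis by simp
  qed
  note bound = this
  have "rho A a w u \<le> rho A' a' w u + e" if e: "e > 0" for e
  proof -
    have "rho A a w u - e \<le> rho A' a' w u"
    proof (rule le_rho[OF infwords_subset[OF w] infwords_subset[OF u]])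
      fix vs
      assume "chain A' w u vs"
      from bound[OF this e] show "rho A a w u - e \<le> chain_cost a' vs"
        by simp
    qed
    then show ?thesis by simp
  qed
  then show ?thesis
    by (rule field_le_epsilon)
qed

lemma rho'_eq_rho: "w \<in> infwords A \<Longrightarrow> u \<in> infwords A \<Longrightarrow> rho A' a' w u = rho A a w u"
  using rho'_le_rho rho_le_rho' by (simp add: antisym)

lemma Phi_cls:
  assumes w: "w \<in> infwords A"
  shows "Phi A' a' (cls A a w) = cls A' a' w"
proof -
  have "cls A' a' u = cls A' a' w" if "u \<in> cls A a w" for u
    using that w rho'_eq_rho infwords_subset
    by (intro cls_eq[OF alphabet_A' weight_a']) (auto simp: cls_def)
  then show ?thesis
    using cls_self[OF alphabet_A weight_a w] unfolding Phi_def by blast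
qed

lemma Phi_in_T: "C \<in> T A a \<Longrightarrow> Phi A' a' C \<in> T A' a'"
  by (auto simp: T_def Phi_cls infwords_subset)

lemma dT_Phi: "C \<in> T A a \<Longrightarrow> D \<in> T A a \<Longrightarrow> dT A' a' (Phi A' a' C) (Phi A' a' D) = dT A a C D"
  by (auto simp: T_def Phi_cls dT_cls alphabet_A alphabet_A' weight_a weight_a'
      infwords_subset rho'_eq_rho)

lemma rho'_retract_le_SUP:
  assumes ne: "A \<noteq> A'" and z: "z \<in> infwords A'"
  shows "rho A' a' (retract A z) z \<le> (SUP j\<in>A' - A. a' j)"
proof -
  have bdd: "bdd_above (a' ` (A' - A))"
    using weight_le_half[OF weight_a'] alphabet_ge_1[OF alphabet_A'] by (auto intro: bdd_aboveI[of _ "1/2"])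
  show ?thesis
  proof (cases "z \<in> infwords A")
    case True
    obtain j where j: "j \<in> A' - A"
      using ne A_subset by blast
    have "0 < a' j"
      using j weight_pos[OF weight_a'] alphabet_ge_1[OF alphabet_A'] by blast
    also have "\<dots> \<le> (SUP j\<in>A' - A. a' j)"
      using j bdd by (rule cSUP_upper)
    finally show ?thesis
      using True by (simp add: retract_eq_self rho_refl alphabet_A' weight_a' infwords_subset)
  next
    case False
    then obtain k where "z k \<notin> A"
      by (auto simp: infwords_def)
    then obtain k where k: "\<forall>i<k. z i \<in> A" "z k \<notin> A"
      by (rule first_outside)
    have "set (pref z k) \<subseteq> A'" "z k \<in> A'" "z k \<noteq> 1" "z \<in> cyl A' (pref z k @ [z k])"
      using k z A_subset alphabet_1_2[OF alphabet_A] by (auto simp: pref_def cyl_iff infwords_def)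
    then have "rho A' a' (retract A z) z \<le> a' (z k)"
      using rho_ext_word_le_weight[OF alphabet_A' weight_a'] k by (simp add: retract_eq_ext_word)
    also have "\<dots> \<le> (SUP j\<in>A' - A. a' j)"
      using k z bdd by (intro cSUP_upper) (auto simp: infwords_def)
    finally show ?thesis .
  qed
qed

lemma hausdist_Phi_T_le:
  assumes "A \<noteq> A'"
  shows "hausdist_on (dT A' a') (Phi A' a' ` T A a) (T A' a') \<le> (SUP j\<in>A' - A. a' j)"
proof (rule hausdist_on_le)
  have "(\<lambda>_. 1) \<in> infwords A"
    using alphabet_1_2[OF alphabet_A] by (simp add: infwords_def)
  then show "Phi A' a' ` T A a \<noteq> {}"
    by (auto simp: T_def)
  fix y
  assume "y \<in> T A' a'"
  then obtain z where z: "z \<in> infwords A'" "y = cls A' a' z"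
    by (auto simp: T_def)
  have "cls A' a' (retract A z) = Phi A' a' (cls A a (retract A z))"
    "cls A a (retract A z) \<in> T A a"
    using retract_in_infwords[OF alphabet_A] by (simp_all add: T_def Phi_cls)
  then have "cls A' a' (retract A z) \<in> Phi A' a' ` T A a"
    by (rule image_eqI)
  moreover have "dT A' a' (cls A' a' (retract A z)) y \<le> (SUP j\<in>A' - A. a' j)"
    using z rho'_retract_le_SUP[OF assms z(1)] retract_in_infwords[OF alphabet_A]
    by (simp add: dT_cls alphabet_A' weight_a' infwords_subset)
  ultimately show "\<exists>x\<in>Phi A' a' ` T A a. dT A' a' x y \<le> (SUP j\<in>A' - A. a' j)"
    by blast
qed (use Phi_in_T dT_nonneg dT_refl alphabet_A' weight_a' in auto)

end

theorem lemma5p10: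
  fixes A A' :: "nat set" and a a' :: "nat \<Rightarrow> real"
  assumes "alphabet A" and "alphabet A'" and "A \<subseteq> A'"
    and "weight a" and "weight a'" and "\<forall>i\<in>A. a' i = a i"
  shows "(\<forall>C\<in>T A a. Phi A' a' C \<in> T A' a')
       \<and> (\<forall>C\<in>T A a. \<forall>D\<in>T A a. dT A' a' (Phi A' a' C) (Phi A' a' D) = dT A a C D)
       \<and> (A \<noteq> A' \<longrightarrow>
            hausdist_on (dT A' a') (Phi A' a' ` T A a) (T A' a') \<le> (SUP j\<in>A' - A. a' j))"
proof -
  interpret alphabet_extension A A' a a'
    using assms by unfold_locales
  show ?thesis
    using Phi_in_T dT_Phi hausdist_Phi_T_le by blast
qed

end
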